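(* Let $v_0=\epsilon$ (the empty word) and for $i>0$ let $v_i=\bigl(v_{i-1}0v_{i-1}1v_{i-1}1v_{i-1}0v_{i-1}2v_{i-1}2\bigr)^{(+)}$ over the alphabet $\{0,1,2\}$. Then for every $i$, the palindrome $v_i$ is rich.
   Context: For a finite word $w$, $w^{(+)}$ denotes the shortest palindrome having $w$ as a prefix. A finite word $w$ is rich if it contains exactly $|w|+1$ distinct palindromic factors (counting the empty word). *)

theory Defs
  imports Main "HOL-Library.Sublist"
begin

definition is_pal :: "'a list \<Rightarrow> bool" where
  "is_pal w \<longleftrightarrow> rev w = w"

text \<open>Palindromic closure: the shortest palindrome having w as a prefix.
  (Unique, since it is determined by its length and the prefix w.)\<close>
definition pal_closure :: "'a list \<Rightarrow> 'a list" where
  "pal_closure w = (ARG_MIN length p. is_pal p \<and> prefix w p)"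

definition pal_factors :: "'a list \<Rightarrow> 'a list set" where
  "pal_factors w = {u. sublist u w \<and> is_pal u}"

definition rich :: "'a list \<Rightarrow> bool" where
  "rich w \<longleftrightarrow> card (pal_factors w) = length w + 1"

fun v :: "nat \<Rightarrow> nat list" where
  "v 0 = []"
| "v (Suc i) = pal_closure
     (v i @ [0] @ v i @ [1] @ v i @ [1] @ v i @ [0] @ v i @ [2] @ v i @ [2])"

end

theory Submission
  imports Defs
begin

text \<open>Let \<open>s = 0110220110\<close> and let \<open>spaced\<close> send \<open>u\<^sub>1\<dots>u\<^sub>n\<close> to
  \<open>s u\<^sub>1 s \<dots> s u\<^sub>n s\<close>. Then \<open>v\<^sub>i = spaced\<^sup>i \<epsilon>\<close>: for \<open>x = v\<^sub>i\<close> the closure of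
  \<open>x0x1x1x0x2x2\<close> is \<open>x0x1x1x0x2x2x0x1x1x0x\<close>, because \<open>2x2\<close> occurs only once in the
  latter, and on these words this coincides with \<open>spaced x\<close>.

  A word is rich iff each of its prefixes ends with a palindrome occurring nowhere earlier.
  If \<open>q\<close> is such a palindrome for a prefix of \<open>u\<close> and \<open>|q| \<ge> 2\<close>, then \<open>spaced q\<close>,
  trimmed symmetrically, is one for each prefix of \<open>spaced u\<close> ending in the next block: any
  earlier occurrence would be aligned with the blocks, because \<open>22\<close> occurs in a spaced
  word only inside a spacer, and would give an earlier occurrence of \<open>q\<close>. Short prefixes,
  where \<open>|q| = 1\<close> is possible, are checked by computation.\<close>

lemma finite_pal_factors: "finite (pal_factors w)"
proof (rule finite_subset)
  show "pal_factors w \<subseteq> set (sublists w)" by (auto simp: pal_factors_def)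
qed simp

lemma pal_factors_Nil: "pal_factors [] = {[]}"
  by (auto simp: pal_factors_def is_pal_def)

lemma pal_suffix_imp_prefix:
  assumes "suffix y x" "is_pal y" "is_pal x"
  shows "prefix y x"
  using assms by (metis is_pal_def suffix_to_prefix)

text \<open>Every palindromic factor of \<open>w @ [a]\<close> that is new is a suffix; all such suffixes
  except the longest one are prefixes of it, hence occur in \<open>w\<close> already.\<close>
lemma pal_factors_snoc_subset: "\<exists>x. pal_factors (w @ [a]) \<subseteq> insert x (pal_factors w)"
proof -
  define S where "S = {p. suffix p (w @ [a]) \<and> is_pal p}"
  have "[] \<in> S" by (simp add: S_def is_pal_def)
  moreover have "\<forall>p. p \<in> S \<longrightarrow> length p < Suc (length (w @ [a]))"
    by (auto simp: S_def dest!: suffix_length_le)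
  ultimately have "\<exists>x. x \<in> S \<and> (\<forall>p. p \<in> S \<longrightarrow> length p \<le> length x)"
    by (rule ex_has_greatest_nat[where P = "\<lambda>p. p \<in> S"])
  then obtain x where "x \<in> S" and longest: "\<And>p. p \<in> S \<Longrightarrow> length p \<le> length x"
    by blast
  then have x: "suffix x (w @ [a])" "is_pal x" by (auto simp: S_def)
  have "y \<in> insert x (pal_factors w)" if "y \<in> pal_factors (w @ [a])" for y
  proof (cases "sublist y w \<or> y = x")
    case False
    from that have y: "sublist y (w @ [a])" "is_pal y" by (auto simp: pal_factors_def)
    with False have "suffix y (w @ [a])" by (simp add: sublist_snoc)
    moreover have "length y \<le> length x" using longest y calculation by (simp add: S_def)
    ultimately have "suffix y x" using x(1) suffix_length_suffix by blast
    with y x False have lt: "strict_prefix y x"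
      by (simp add: pal_suffix_imp_prefix strict_prefix_def)
    then have "x \<noteq> []" by auto
    then obtain x' where "x = x' @ [a]" "suffix x' w"
      using x(1) suffix_snoc[of x w a] by blast
    with lt have "sublist y w"
      by (metis prefix_imp_sublist prefix_snoc strict_prefix_def sublist_order.order_trans
          suffix_imp_sublist)
    with False show ?thesis by simp
  qed (use that in \<open>auto simp: pal_factors_def\<close>)
  then show ?thesis by blast
qed

lemma card_pal_factors_snoc_le: "card (pal_factors (w @ [a])) \<le> Suc (card (pal_factors w))"
proof -
  from pal_factors_snoc_subset[of w a]
  obtain x where "pal_factors (w @ [a]) \<subseteq> insert x (pal_factors w)" ..
  then have "card (pal_factors (w @ [a])) \<le> card (insert x (pal_factors w))"
    by (simp add: card_mono finite_pal_factors)
  also have "\<dots> \<le> Suc (card (pal_factors w))"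
    by (simp add: card_insert_if finite_pal_factors)
  finally show ?thesis .
qed

lemma card_pal_factors_le: "card (pal_factors w) \<le> length w + 1"
  by (induction w rule: rev_induct)
    (auto simp: pal_factors_Nil intro: le_trans[OF card_pal_factors_snoc_le])

lemma pal_factors_mono: "sublist w w' \<Longrightarrow> pal_factors w \<subseteq> pal_factors w'"
  by (auto simp: pal_factors_def intro: sublist_order.order_trans)

lemma rich_snoc_iff:
  assumes "rich w"
  shows "rich (w @ [a]) \<longleftrightarrow> (\<exists>p. suffix p (w @ [a]) \<and> is_pal p \<and> \<not> sublist p w)"
proof
  assume rich: "rich (w @ [a])"
  show "\<exists>p. suffix p (w @ [a]) \<and> is_pal p \<and> \<not> sublist p w"
  proof (rule ccontr)
    assume "\<not> ?thesis"
    then have "pal_factors (w @ [a]) \<subseteq> pal_factors w"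
      unfolding pal_factors_def using sublist_snoc[of _ w a] by blast
    then have "card (pal_factors (w @ [a])) \<le> card (pal_factors w)"
      by (simp add: card_mono finite_pal_factors)
    with rich assms show False by (simp add: rich_def)
  qed
next
  assume "\<exists>p. suffix p (w @ [a]) \<and> is_pal p \<and> \<not> sublist p w"
  then obtain p where p: "p \<in> pal_factors (w @ [a])" "p \<notin> pal_factors w"
    unfolding pal_factors_def by blast
  then have "insert p (pal_factors w) \<subseteq> pal_factors (w @ [a])"
    using pal_factors_mono[of w "w @ [a]"] by blast
  then have "card (insert p (pal_factors w)) \<le> card (pal_factors (w @ [a]))"
    by (simp add: card_mono finite_pal_factors)
  then have "Suc (card (pal_factors w)) \<le> card (pal_factors (w @ [a]))"
    using p(2) by (simp add: finite_pal_factors)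
  with assms card_pal_factors_le[of "w @ [a]"] show "rich (w @ [a])"
    by (simp add: rich_def)
qed

lemma rich_Nil: "rich []"
  by (simp add: rich_def pal_factors_Nil)

lemma rich_butlast: "rich (w @ [a]) \<Longrightarrow> rich w"
  using card_pal_factors_snoc_le[of w a] card_pal_factors_le[of w] by (simp add: rich_def)

lemma rich_iff_new_pal_suffixes:
  "rich w \<longleftrightarrow>
     (\<forall>n < length w. \<exists>p. suffix p (take (Suc n) w) \<and> is_pal p \<and> \<not> sublist p (take n w))"
proof (induction w rule: rev_induct)
  case (snoc a w)
  let ?new = "\<lambda>w n. \<exists>p. suffix p (take (Suc n) w) \<and> is_pal p \<and> \<not> sublist p (take n w)"
  have "take (Suc (length w)) (w @ [a]) = w @ [a]" "take (length w) (w @ [a]) = w"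
    by simp_all
  then have "rich (w @ [a]) \<longleftrightarrow> rich w \<and> ?new (w @ [a]) (length w)"
    using rich_snoc_iff[of w a] rich_butlast[of w a] by (simp only:) blast
  also have "\<dots> \<longleftrightarrow> (\<forall>n < length w. ?new (w @ [a]) n) \<and> ?new (w @ [a]) (length w)"
  proof -
    have "?new (w @ [a]) n \<longleftrightarrow> ?new w n" if "n < length w" for n
      using that by simp
    then show ?thesis using snoc.IH by simp
  qed
  also have "\<dots> \<longleftrightarrow> (\<forall>n < length (w @ [a]). ?new (w @ [a]) n)"
    by (auto simp: less_Suc_eq)
  finally show ?case .
qed (simp add: rich_Nil)

lemma rich_prefix:
  assumes "rich w" "prefix p w"
  shows "rich p"
  unfolding rich_iff_new_pal_suffixes
proof (intro allI impI)
  fix n assume n: "n < length p"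
  from assms(2) obtain zs where w: "w = p @ zs" by (auto simp: prefix_def)
  with n have eqs: "take (Suc n) p = take (Suc n) w" "take n p = take n w" and "n < length w"
    by simp_all
  with assms(1) obtain q where "suffix q (take (Suc n) w)" "is_pal q" "\<not> sublist q (take n w)"
    unfolding rich_iff_new_pal_suffixes by blast
  with eqs show "\<exists>q. suffix q (take (Suc n) p) \<and> is_pal q \<and> \<not> sublist q (take n p)"
    by metis
qed

definition trim :: "nat \<Rightarrow> 'a list \<Rightarrow> 'a list" where
  "trim t x = drop t (take (length x - t) x)"

lemma length_trim [simp]: "length (trim t x) = length x - 2 * t"
  by (simp add: trim_def)

lemma nth_trim: "i < length (trim t x) \<Longrightarrow> trim t x ! i = x ! (t + i)"
  by (simp add: trim_def)

lemma trim_trim: "trim s (trim t x) = trim (s + t) x"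
  by (simp add: trim_def drop_take) (simp add: algebra_simps)

lemma trim_append: "length a = t \<Longrightarrow> length c = t \<Longrightarrow> trim t (a @ b @ c) = b"
  by (simp add: trim_def)

lemma rev_trim: "rev (trim t x) = trim t (rev x)"
  by (rule nth_equalityI) (auto simp: rev_nth nth_trim)

lemma is_pal_trim: "is_pal x \<Longrightarrow> is_pal (trim t x)"
  by (simp add: is_pal_def rev_trim)

definition occurs_at :: "'a list \<Rightarrow> 'a list \<Rightarrow> nat \<Rightarrow> bool" where
  "occurs_at y x p \<longleftrightarrow> p + length y \<le> length x \<and> (\<forall>i < length y. x ! (p + i) = y ! i)"

lemma occurs_at_nthD: "occurs_at y x p \<Longrightarrow> i < length y \<Longrightarrow> x ! (p + i) = y ! i"
  by (simp add: occurs_at_def)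

lemma sublist_iff_occurs_at: "sublist y x \<longleftrightarrow> (\<exists>p. occurs_at y x p)"
proof
  assume "sublist y x"
  then obtain a b where "x = a @ y @ b" by (auto simp: sublist_def)
  then have "occurs_at y x (length a)" by (simp add: occurs_at_def nth_append)
  then show "\<exists>p. occurs_at y x p" ..
next
  assume "\<exists>p. occurs_at y x p"
  then obtain p where p: "occurs_at y x p" ..
  then have "y = take (length y) (drop p x)"
    by (intro nth_equalityI) (auto simp: occurs_at_def)
  then have "x = take p x @ y @ drop (length y) (drop p x)"
    by (metis append_take_drop_id)
  then show "sublist y x" by (metis sublist_appendI)
qed

lemma occurs_at_prefix: "prefix (a @ y) x \<Longrightarrow> occurs_at y x (length a)"
  by (auto simp: occurs_at_def prefix_def nth_append)

lemma occurs_at_trim_take: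
  assumes "occurs_at y (take n x) p" "2 * t \<le> length y"
  shows "occurs_at (trim t y) (take (n - t) x) (p + t)"
  using assms by (auto simp: occurs_at_def nth_trim add.assoc)

lemma sublist_trim_take:
  "sublist y (take n x) \<Longrightarrow> 2 * t \<le> length y \<Longrightarrow> sublist (trim t y) (take (n - t) x)"
  by (meson occurs_at_trim_take sublist_iff_occurs_at)

definition spacer :: "nat list" where
  "spacer = [0, 1, 1, 0, 2, 2, 0, 1, 1, 0]"

definition spaced :: "nat list \<Rightarrow> nat list" where
  "spaced u = spacer @ concat (map (\<lambda>c. c # spacer) u)"

definition threaded :: "nat list \<Rightarrow> nat list" where
  "threaded x = x @ concat (map (\<lambda>c. c # x) spacer)"

lemma length_spacer [simp]: "length spacer = 10"
  by (simp add: spacer_def)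

lemma is_pal_spacer: "is_pal spacer"
  by (simp add: is_pal_def spacer_def)

lemma length_spaced [simp]: "length (spaced u) = 11 * length u + 10"
  by (induction u) (auto simp: spaced_def)

lemma spaced_Nil [simp]: "spaced [] = spacer"
  by (simp add: spaced_def)

lemma spaced_Cons: "spaced (c # u) = spacer @ c # spaced u"
  by (simp add: spaced_def)

lemma spaced_append: "spaced (u @ u') = spaced u @ concat (map (\<lambda>c. c # spacer) u')"
  by (simp add: spaced_def)

lemma spaced_append_spaced: "spaced (u @ u') = concat (map (\<lambda>c. spacer @ [c]) u) @ spaced u'"
  by (induction u) (simp_all add: spaced_Cons)

lemma set_spaced: "set (spaced u) = {0, 1, 2} \<union> set u"
  by (auto simp: spaced_def spacer_def)

lemma nth_spaced:
  "n < length (spaced u) \<Longrightarrow>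
     spaced u ! n = (if n mod 11 = 10 then u ! (n div 11) else spacer ! (n mod 11))"
proof (induction u arbitrary: n)
  case (Cons c u)
  show ?case
  proof (cases "n < 11")
    case True
    then show ?thesis
      by (cases "n = 10") (simp_all add: spaced_Cons nth_append)
  next
    case False
    then obtain m where n: "n = m + 11"
      by (metis add.commute le_add_diff_inverse not_less)
    then have "spaced (c # u) ! n = spaced u ! m"
      by (simp add: spaced_Cons nth_append)
    moreover have "(m + 11) div 11 = Suc (m div 11)" "(m + 11) mod 11 = m mod 11"
      by simp_all
    ultimately show ?thesis using Cons n by simp
  qed
qed (simp add: spaced_def)

lemma nth_spaced_letter: "a < length u \<Longrightarrow> spaced u ! (11 * a + 10) = u ! a"
  by (subst nth_spaced) auto

lemma nth_spaced_spacer: "b < 10 \<Longrightarrow> a \<le> length u \<Longrightarrow> spaced u ! (11 * a + b) = spacer ! b"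
  by (subst nth_spaced) auto

lemma rev_spaced: "rev (spaced u) = spaced (rev u)"
proof (induction u)
  case (Cons c u)
  then show ?case
    using is_pal_spacer by (simp add: spaced_Cons spaced_append is_pal_def)
qed (simp add: is_pal_spacer[unfolded is_pal_def])

lemma is_pal_spaced: "is_pal u \<Longrightarrow> is_pal (spaced u)"
  by (simp add: is_pal_def rev_spaced)

lemma take_spaced: "k \<le> length u \<Longrightarrow> take (11 * k + 10) (spaced u) = spaced (take k u)"
  using spaced_append[of "take k u" "drop k u"] by (simp add: min_def)

lemma length_threaded [simp]: "length (threaded x) = 11 * length x + 10"
  by (simp add: threaded_def spacer_def)

lemma threaded_spaced: "threaded (spaced x) = spaced (threaded x)"
  by (simp add: threaded_def spaced_append spaced_def spacer_def)

lemma is_pal_threaded: "is_pal x \<Longrightarrow> is_pal (threaded x)"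
  by (simp add: is_pal_def threaded_def spacer_def)

lemma spacer_nth_2:
  assumes "b < 10"
  shows "spacer ! b = 2 \<longleftrightarrow> b = 4 \<or> b = 5"
proof -
  have "b \<in> {0, 1, 2, 3, 4, 5, 6, 7, 8, 9}" using assms by auto
  then show ?thesis by (auto simp: spacer_def)
qed

lemma spaced_22:
  assumes "n + 1 < length (spaced u)" "spaced u ! n = 2" "spaced u ! (n + 1) = 2"
  shows "n mod 11 = 4"
proof -
  define a b where "a = n div 11" and "b = n mod 11"
  have n: "n = 11 * a + b" and "b < 11" by (simp_all add: a_def b_def)
  have a: "a \<le> length u" using assms(1) n by simp
  consider "b = 10" | "b = 9" | "b < 9" using \<open>b < 11\<close> by linarith
  then show ?thesis
  proof cases
    case 1
    with n have "n + 1 = 11 * (a + 1) + 0" by simp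
    moreover have "a + 1 \<le> length u" using assms(1) 1 n by simp
    ultimately have "spaced u ! (n + 1) = spacer ! 0"
      using nth_spaced_spacer[of 0 "a + 1" u] by simp
    with assms(3) show ?thesis by (simp add: spacer_def)
  next
    case 2
    with n a have "spaced u ! n = spacer ! 9" using nth_spaced_spacer[of 9 a u] by simp
    with assms(2) show ?thesis by (simp add: spacer_def)
  next
    case 3
    with assms(2,3) n a have "spacer ! b = 2" "spacer ! (b + 1) = 2"
      using nth_spaced_spacer[of b a u] nth_spaced_spacer[of "b + 1" a u] by (simp_all add: add.assoc)
    with 3 show ?thesis by (auto simp: spacer_nth_2 b_def)
  qed
qed

lemma spacer_occurs_at_spaced: "occurs_at spacer (spaced z) p \<Longrightarrow> p mod 11 = 0"
proof -
  assume "occurs_at spacer (spaced z) p"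
  then have "p + 10 \<le> length (spaced z)" and at: "\<And>i. i < 10 \<Longrightarrow> spaced z ! (p + i) = spacer ! i"
    by (auto simp: occurs_at_def)
  moreover have "spaced z ! (p + 4) = spacer ! 4" "spaced z ! (p + 4 + 1) = spacer ! (4 + 1)"
    unfolding add.assoc by (rule at, simp)+
  ultimately have "p + 4 + 1 < length (spaced z)" "spaced z ! (p + 4) = 2" "spaced z ! (p + 4 + 1) = 2"
    by (simp_all add: spacer_def)
  then have "(p + 4) mod 11 = 4" by (rule spaced_22)
  then show ?thesis by presburger
qed

text \<open>Synchronisation: a factor containing a full spacer can only sit in one position
  relative to the block structure.\<close>
lemma occurs_at_trim_spaced:
  assumes "occurs_at (trim 10 (spaced q)) (spaced z) p" "2 \<le> length q"
  shows "\<exists>r. p = 11 * r + 10 \<and> occurs_at q z r"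
proof -
  let ?e = "trim 10 (spaced q)"
  from assms(1) have fits: "p + length ?e \<le> length (spaced z)"
    and at: "\<And>i. i < length ?e \<Longrightarrow> spaced z ! (p + i) = spaced q ! (10 + i)"
    by (auto simp: occurs_at_def nth_trim)
  have "occurs_at spacer (spaced z) (p + 1)"
    unfolding occurs_at_def
  proof (intro conjI allI impI)
    show "p + 1 + length spacer \<le> length (spaced z)" using fits assms(2) by simp
    fix i assume "i < length spacer"
    then have "spaced z ! (p + 1 + i) = spaced q ! (11 * 1 + i)"
      using at[of "1 + i"] assms(2) by (simp add: add.assoc)
    also have "\<dots> = spacer ! i" using \<open>i < length spacer\<close> assms(2)
      by (intro nth_spaced_spacer) simp_all
    finally show "spaced z ! (p + 1 + i) = spacer ! i" .
  qed
  then have "(p + 1) mod 11 = 0" by (rule spacer_occurs_at_spaced)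
  then have "p = 11 * (p div 11) + 10" by presburger
  then obtain r where p: "p = 11 * r + 10" ..
  have "occurs_at q z r"
    unfolding occurs_at_def
  proof (intro conjI allI impI)
    show "r + length q \<le> length z" using fits p assms(2) by simp
    fix t assume t: "t < length q"
    with \<open>r + length q \<le> length z\<close> have "z ! (r + t) = spaced z ! (11 * (r + t) + 10)"
      by (intro nth_spaced_letter[symmetric]) simp
    also have "\<dots> = spaced z ! (p + 11 * t)" by (simp add: p algebra_simps)
    also have "\<dots> = spaced q ! (11 * t + 10)" using at[of "11 * t"] t by (simp add: add.commute)
    also have "\<dots> = q ! t" using t by (rule nth_spaced_letter)
    finally show "z ! (r + t) = q ! t" .
  qed
  with p show ?thesis by blast
qed

lemma sublist_trim_spaced: "sublist (trim 10 (spaced q)) (spaced z) \<Longrightarrow> 2 \<le> length q \<Longrightarrow> sublist q z"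
  by (meson occurs_at_trim_spaced sublist_iff_occurs_at)

lemma suffix_trim_spaced_take:
  assumes "suffix q (take k u)" "k \<le> length u" "j \<le> 10"
  shows "suffix (trim (10 - j) (spaced q)) (take (11 * k + j) (spaced u))"
proof -
  obtain a where a: "take k u = a @ q" using assms(1) by (auto simp: suffix_def)
  define b where "b = concat (map (\<lambda>c. spacer @ [c]) a)"
  have b: "length b = 11 * length a" unfolding b_def by (induction a) simp_all
  have "k = length a + length q" using a assms(2) by (metis length_append length_take min.absorb2)
  have "take (11 * k + j) (spaced u) = take (11 * k + j) (take (11 * k + 10) (spaced u))"
    using assms(3) by simp
  also have "\<dots> = take (11 * k + j) (b @ spaced q)"
    using a assms(2) by (simp add: take_spaced spaced_append_spaced b_def)
  also have "\<dots> = b @ take (length (spaced q) - (10 - j)) (spaced q)"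
    using b \<open>k = length a + length q\<close> assms(3) by simp
  finally show ?thesis
    unfolding trim_def by (metis suffix_appendI suffix_drop)
qed

lemma rich_spaced_01102: "rich (spaced [0, 1, 1, 0, 2])"
proof -
  let ?w = "spaced [0, 1, 1, 0, 2]"
  have "\<forall>n < length ?w. \<exists>p \<in> set (suffixes (take (Suc n) ?w)).
      is_pal p \<and> \<not> sublist p (take n ?w)"
    by code_simp
  then show ?thesis
    unfolding rich_iff_new_pal_suffixes Bex_def in_set_suffixes .
qed

lemma length_ge_2_if_not_sublist: "\<not> sublist q w \<Longrightarrow> set q \<subseteq> set w \<Longrightarrow> 2 \<le> length q"
proof (rule ccontr)
  assume q: "\<not> sublist q w" "set q \<subseteq> set w" and "\<not> 2 \<le> length q"
  moreover have "length q \<noteq> 0" using q(1) by auto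
  ultimately have "length q = 1" by linarith
  then obtain c where "q = [c]" by (auto simp: length_Suc_conv)
  with q(2) have "sublist [c] w"
    by (metis in_set_conv_decomp sublist_appendI append_Cons append_Nil list.set_intros(1) subsetD)
  with q(1) \<open>q = [c]\<close> show False by simp
qed

lemma new_pal_suffix_spaced:
  assumes q: "suffix q (take (Suc m) u)" "is_pal q" "\<not> sublist q (take m u)" "2 \<le> length q"
    and "m < length u" "j \<le> 10"
  shows "\<exists>p. suffix p (take (Suc (11 * m + 10 + j)) (spaced u)) \<and> is_pal p
    \<and> \<not> sublist p (take (11 * m + 10 + j) (spaced u))"
proof (intro exI conjI)
  let ?e = "trim (10 - j) (spaced q)"
  have "Suc (11 * m + 10 + j) = 11 * Suc m + j" by simp
  then show "suffix ?e (take (Suc (11 * m + 10 + j)) (spaced u))"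
    using suffix_trim_spaced_take[OF q(1) _ assms(6)] assms(5) by (simp only:)
  show "is_pal ?e" using q(2) by (intro is_pal_trim is_pal_spaced)
  show "\<not> sublist ?e (take (11 * m + 10 + j) (spaced u))"
  proof
    assume "sublist ?e (take (11 * m + 10 + j) (spaced u))"
    moreover have "2 * j \<le> length ?e" using q(4) assms(6) by simp
    ultimately have "sublist (trim j ?e) (take (11 * m + 10 + j - j) (spaced u))"
      by (rule sublist_trim_take)
    moreover have "trim j ?e = trim 10 (spaced q)" using assms(6) by (simp add: trim_trim)
    moreover have "take (11 * m + 10 + j - j) (spaced u) = spaced (take m u)"
      using assms(5) take_spaced[of m u] by simp
    ultimately have "sublist q (take m u)" using q(4) sublist_trim_spaced by simp
    with q(3) show False ..
  qed
qed

lemma rich_spaced: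
  assumes rich: "rich u" and "prefix [0, 1, 1, 0, 2] u" and "set u \<subseteq> {0, 1, 2}"
  shows "rich (spaced u)"
  unfolding rich_iff_new_pal_suffixes
proof (intro allI impI)
  let ?new = "\<lambda>w n. \<exists>p. suffix p (take (Suc n) w) \<and> is_pal p \<and> \<not> sublist p (take n w)"
  fix n assume n: "n < length (spaced u)"
  obtain u' where u: "u = [0, 1, 1, 0, 2] @ u'" using assms(2) by (auto simp: prefix_def)
  show "?new (spaced u) n"
  proof (cases "n < 65")
    case True
    have "take 65 (spaced u) = spaced [0, 1, 1, 0, 2]"
      using take_spaced[of 5 u] u by simp
    then have "take (Suc n) (spaced u) = take (Suc n) (spaced [0, 1, 1, 0, 2])"
      "take n (spaced u) = take n (spaced [0, 1, 1, 0, 2])"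
      using True by (metis Suc_leI less_imp_le_nat min.absorb1 take_take)+
    with rich_spaced_01102 True show ?thesis
      unfolding rich_iff_new_pal_suffixes by simp
  next
    case False
    define k j where "k = Suc n div 11" and "j = Suc n mod 11"
    have "Suc n = 11 * k + j" and "j \<le> 10" and "6 \<le> k" and "k \<le> length u"
      using False n by (simp_all add: k_def j_def)
    moreover define m where "m = k - 1"
    ultimately have n_mj: "n = 11 * m + 10 + j" and "5 \<le> m" and "m < length u" by simp_all
    with rich obtain q where q: "suffix q (take (Suc m) u)" "is_pal q" "\<not> sublist q (take m u)"
      unfolding rich_iff_new_pal_suffixes by blast
    have "set q \<subseteq> set u" using set_mono_suffix[OF q(1)] by (auto dest: in_set_takeD)
    also have "\<dots> \<subseteq> set (take 5 u)" using assms(3) u by auto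
    also have "\<dots> \<subseteq> set (take m u)" using \<open>5 \<le> m\<close> by (rule set_take_subset_set_take)
    finally have "2 \<le> length q" using q(3) by (intro length_ge_2_if_not_sublist)
    from new_pal_suffix_spaced[OF q this \<open>m < length u\<close> \<open>j \<le> 10\<close>] show ?thesis
      unfolding n_mj .
  qed
qed

lemma pal_prefix_unique:
  assumes "is_pal (w @ r)" "is_pal (w @ r')" "length r = length r'" "length r \<le> length w"
  shows "r = r'"
proof -
  have "rev s = take (length s) w" if "is_pal (w @ s)" "length s \<le> length w" for s
  proof -
    from that(1) have "take (length s) (rev s @ rev w) = take (length s) (w @ s)"
      by (simp add: is_pal_def)
    with that(2) show ?thesis by simp
  qed
  with assms have "rev r = rev r'" by simp
  then show ?thesis by simp
qed

lemma pal_closure_eqI: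
  assumes "is_pal p" "prefix w p" "length p \<le> 2 * length w"
    and shortest: "\<And>p'. is_pal p' \<Longrightarrow> prefix w p' \<Longrightarrow> length p \<le> length p'"
  shows "pal_closure w = p"
proof -
  let ?c = "pal_closure w"
  have c: "is_pal ?c" "prefix w ?c" "length ?c \<le> length p"
    using arg_min_nat_lemma[of "\<lambda>p. is_pal p \<and> prefix w p" p length] assms(1,2)
    unfolding pal_closure_def by blast+
  from c(1,2) have "length p \<le> length ?c" by (rule shortest)
  with c(3) have len: "length ?c = length p" by (rule le_antisym)
  obtain r where r: "?c = w @ r" using c(2) unfolding prefix_def ..
  obtain r' where r': "p = w @ r'" using assms(2) unfolding prefix_def ..
  have "r = r'"
  proof (rule pal_prefix_unique)
    show "is_pal (w @ r)" using c(1) unfolding r .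
    show "is_pal (w @ r')" using assms(1) unfolding r' .
    show "length r = length r'" using len unfolding r r' by simp
    then show "length r \<le> length w" using assms(3) unfolding r' by simp
  qed
  with r r' show ?thesis by simp
qed

lemma threaded_spaced_iter: "threaded ((spaced ^^ i) []) = spaced ((spaced ^^ i) [])"
  by (induction i) (simp_all add: threaded_spaced, simp add: threaded_def spacer_def)

lemma is_pal_spaced_iter: "is_pal ((spaced ^^ i) [])"
  by (induction i) (simp_all add: is_pal_spaced, simp add: is_pal_def)

lemma bracket_occurs_at_threaded:
  assumes "occurs_at ([2] @ x @ [2]) (threaded x) d" "x = (spaced ^^ i) []"
  shows "d = 5 * length x + 4"
  using assms
proof (induction i arbitrary: x d)
  case 0
  then have occ: "occurs_at [2, 2] (spaced []) d" by (simp add: threaded_def spacer_def)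
  then have "d + 1 < length (spaced [])" "spaced [] ! d = 2" "spaced [] ! (d + 1) = 2"
    using occurs_at_nthD[OF occ, of 0] occurs_at_nthD[OF occ, of 1] by (auto simp: occurs_at_def)
  then have "d mod 11 = 4" by (rule spaced_22)
  moreover have "d < 11" using \<open>d + 1 < length (spaced [])\<close> by simp
  ultimately show ?case using 0 by simp
next
  case (Suc i)
  define y where "y = (spaced ^^ i) []"
  have "spaced ([2] @ y @ [2]) = spacer @ ([2] @ spaced y @ [2]) @ spacer"
    by (simp add: spaced_Cons spaced_append)
  then have "[2] @ x @ [2] = trim 10 (spaced ([2] @ y @ [2]))"
    using trim_append[of spacer 10 spacer "[2] @ spaced y @ [2]"] Suc.prems(2) y_def by simp
  moreover have "threaded x = spaced (threaded y)"
    by (simp add: Suc.prems(2) y_def threaded_spaced)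
  ultimately obtain r where d: "d = 11 * r + 10" and occ: "occurs_at ([2] @ y @ [2]) (threaded y) r"
    using occurs_at_trim_spaced[of "[2] @ y @ [2]" "threaded y" d] Suc.prems(1) by auto
  from Suc.IH[OF occ y_def] have "r = 5 * length y + 4" .
  with d Suc.prems(2) y_def show ?case by simp
qed

lemma pal_closure_spaced_iter:
  assumes x: "x = (spaced ^^ i) []"
  shows "pal_closure (x @ [0] @ x @ [1] @ x @ [1] @ x @ [0] @ x @ [2] @ x @ [2]) = threaded x"
proof (rule pal_closure_eqI)
  define a where "a = x @ [0] @ x @ [1] @ x @ [1] @ x @ [0] @ x"
  have w: "x @ [0] @ x @ [1] @ x @ [1] @ x @ [0] @ x @ [2] @ x @ [2] = a @ [2] @ x @ [2]"
    by (simp add: a_def)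
  have "is_pal x" using x is_pal_spaced_iter by simp
  then show "is_pal (threaded x)" by (rule is_pal_threaded)
  show "prefix (x @ [0] @ x @ [1] @ x @ [1] @ x @ [0] @ x @ [2] @ x @ [2]) (threaded x)"
    by (simp add: threaded_def spacer_def)
  then have pre: "prefix (a @ [2] @ x @ [2]) (threaded x)" by (simp only: w)
  show "length (threaded x) \<le> 2 * length (x @ [0] @ x @ [1] @ x @ [1] @ x @ [0] @ x @ [2] @ x @ [2])"
    by simp
  fix p assume p: "is_pal p" "prefix (x @ [0] @ x @ [1] @ x @ [1] @ x @ [0] @ x @ [2] @ x @ [2]) p"
  from p(2) obtain r where "p = (x @ [0] @ x @ [1] @ x @ [1] @ x @ [0] @ x @ [2] @ x @ [2]) @ r"
    unfolding prefix_def ..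
  then have r: "p = a @ [2] @ x @ [2] @ r" by (simp add: a_def)
  show "length (threaded x) \<le> length p"
  proof (rule ccontr)
    assume "\<not> ?thesis"
    then have short: "length r < 5 * length x + 4" by (simp add: r a_def)
    text \<open>Reading the palindrome \<open>p\<close> backwards exhibits \<open>2x2\<close> at position \<open>|r|\<close>,
      inside the prefix \<open>a 2x2\<close> of \<open>threaded x\<close>; but there it occurs only in the middle.\<close>
    have "p = rev p" using p(1) by (simp add: is_pal_def)
    also have "\<dots> = rev r @ [2] @ x @ [2] @ rev a"
      using \<open>is_pal x\<close> by (simp add: r is_pal_def)
    finally have "prefix (rev r @ [2] @ x @ [2]) p" by (simp add: prefix_def)
    moreover have "prefix (a @ [2] @ x @ [2]) p" by (simp add: r prefix_def)
    moreover have "length (rev r @ [2] @ x @ [2]) \<le> length (a @ [2] @ x @ [2])"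
      using short by (simp add: a_def)
    ultimately have "prefix (rev r @ [2] @ x @ [2]) (a @ [2] @ x @ [2])"
      by (rule prefix_length_prefix)
    then have "prefix (rev r @ [2] @ x @ [2]) (threaded x)"
      using pre by (rule prefix_order.trans)
    then have "occurs_at ([2] @ x @ [2]) (threaded x) (length r)"
      using occurs_at_prefix[of "rev r" "[2] @ x @ [2]" "threaded x"] by simp
    then have "length r = 5 * length x + 4" using x by (rule bracket_occurs_at_threaded)
    with short show False by simp
  qed
qed

lemma v_eq_spaced_iter: "v i = (spaced ^^ i) []"
proof (induction i)
  case (Suc i)
  then show ?case
    using pal_closure_spaced_iter[of "v i" i] threaded_spaced_iter[of i] by simp
qed simp

lemma rich_spaced_iter: "rich ((spaced ^^ i) [])"
proof (induction i)
  case (Suc i)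
  show ?case
  proof (cases i)
    case 0
    have "prefix (spaced []) (spaced [0, 1, 1, 0, 2])" by (simp add: spaced_def)
    with 0 show ?thesis using rich_prefix[OF rich_spaced_01102] by simp
  next
    case (Suc m)
    have "set ((spaced ^^ j) []) \<subseteq> {0, 1, 2}" for j
      by (induction j) (simp_all add: set_spaced)
    moreover have "prefix [0, 1, 1, 0, 2] ((spaced ^^ i) [])"
      using Suc by (simp add: spaced_def spacer_def)
    ultimately show ?thesis using Suc.IH by (simp add: rich_spaced)
  qed
qed (simp add: rich_Nil)

theorem lemma5p7:
  shows "is_pal (v i) \<and> rich (v i)"
  by (simp add: v_eq_spaced_iter is_pal_spaced_iter rich_spaced_iter)

end
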